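(* Let $m\ge 2$ and let $C_1,\dots,C_m\subset\mathbb{R}^n$ be nonempty, closed, convex sets; put $C=C_1\times\cdots\times C_m$ and, for $a=(a_1,\dots,a_m)\in C$, $D(a)=\sum_{i=1}^m\|a_i-a_{i+1}\|$ with $a_{m+1}=a_1$. Suppose that either (i) all the sets $C_1,\dots,C_m$ are bounded, or (ii) for every index $j\in\{1,\dots,m\}$ such that $C_j$ is unbounded, and for every sequence $(a_j^{(k)})_{k}\subset C_j$ with $\|a_j^{(k)}\|\to\infty$, at least one of $d_{C_{j-1}}(a_j^{(k)})\to\infty$ or $d_{C_{j+1}}(a_j^{(k)})\to\infty$ holds as $k\to\infty$ (indices taken cyclically, $C_0=C_m$, $C_{m+1}=C_1$). Then the problem $\min_{a\in C} D(a)$ admits an optimal solution, i.e. there is $a^*\in C$ with $D(a^* )=\inf_{a\in C}D(a)$.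
   Context: $\|\cdot\|$ is the Euclidean norm on $\mathbb{R}^n$. For a nonempty set $K\subset\mathbb{R}^n$, $d_K(x)=\inf_{y\in K}\|x-y\|$ is the distance function of $K$. The problem $\min_{a\in C}D(a)$ is called the generalized waist problem for the ordered family $(C_1,\dots,C_m)$. *)

theory Defs
  imports "HOL-Analysis.Analysis"
begin

definition cyc_len :: "nat \<Rightarrow> (nat \<Rightarrow> 'a::real_normed_vector) \<Rightarrow> real" where
  "cyc_len m a = (\<Sum>i<m. norm (a i - a ((i + 1) mod m)))"

definition prod_sets :: "nat \<Rightarrow> (nat \<Rightarrow> 'a set) \<Rightarrow> (nat \<Rightarrow> 'a) set" where
  "prod_sets m C = {a. \<forall>i<m. a i \<in> C i}"

end

theory Submission
  imports Defs
begin

text \<open>Fix any a0 in the product. The sublevel set {a. D a \<le> D a0} is bounded in every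
  coordinate j: for bounded C j this is trivial, and otherwise a sequence in the sublevel set
  whose j-th coordinates escape to infinity would keep the distances from a j to both
  neighbouring sets below D a0, since each is dominated by one edge of the closed polygon.
  Hence the infimum is the same as over the product of the closures of the coordinate
  projections of the sublevel set, which are compact, and there the continuous perimeter
  attains its minimum by Tychonoff's theorem.\<close>

lemma compact_PiE_UNIV:
  fixes S :: "'i \<Rightarrow> 'b::topological_space set"
  assumes "\<And>i. compact (S i)"
  shows "compact (PiE UNIV S)"
proof -
  have "compactin (product_topology (\<lambda>_. euclidean) UNIV) (PiE UNIV S)"
    using assms by (simp add: compactin_PiE)
  then show ?thesis
    by (simp add: euclidean_product_topology)
qed

lemma not_filterlim_at_top_if_eventually_bounded:
  fixes g :: "'b \<Rightarrow> real"
  assumes "F \<noteq> bot" and "\<forall>\<^sub>F x in F. g x \<le> M"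
  shows "\<not> filterlim g at_top F"
proof
  assume "filterlim g at_top F"
  then have "\<forall>\<^sub>F x in F. M + 1 \<le> g x"
    by (simp add: filterlim_at_top)
  with assms(2) have "\<forall>\<^sub>F x in F. False"
    by eventually_elim linarith
  with assms(1) show False
    by simp
qed

lemma unbounded_imp_norm_filterlim_at_top:
  fixes S :: "'a::real_normed_vector set"
  assumes "\<not> bounded S"
  obtains x where "\<And>k. x k \<in> S" and "filterlim (\<lambda>k. norm (x k)) at_top sequentially"
proof -
  have "\<forall>k::nat. \<exists>y\<in>S. real k < norm y"
    using assms by (meson bounded_iff not_le)
  then obtain x where x: "\<And>k. x k \<in> S" "\<And>k. real k < norm (x k)"
    by metis
  have "filterlim (\<lambda>k. norm (x k)) at_top sequentially"
    by (rule filterlim_at_top_mono[OF filterlim_real_sequentially])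
      (intro always_eventually allI less_imp_le x(2))
  with x(1) show thesis
    by (rule that)
qed

lemma cyc_len_cong:
  assumes "\<And>i. i < m \<Longrightarrow> a i = b i"
  shows "cyc_len m a = cyc_len m b"
  unfolding cyc_len_def by (rule sum.cong) (simp_all add: assms)

lemma continuous_on_cyc_len:
  "continuous_on S (cyc_len m :: (nat \<Rightarrow> 'a::real_normed_vector) \<Rightarrow> real)"
proof -
  have "continuous_on S (\<lambda>a :: nat \<Rightarrow> 'a. \<Sum>i<m. norm (a i - a ((i + 1) mod m)))"
    by (intro continuous_on_sum continuous_on_norm continuous_on_diff
        continuous_on_product_then_coordinatewise[OF continuous_on_id])
  then show ?thesis
    by (simp add: cyc_len_def[abs_def])
qed

lemma norm_diff_succ_le_cyc_len:
  assumes "i < m"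
  shows "norm (a i - a ((i + 1) mod m)) \<le> cyc_len m a"
  unfolding cyc_len_def
  by (rule member_le_sum[where f = "\<lambda>i. norm (a i - a ((i + 1) mod m))"]) (simp_all add: assms)

lemma norm_diff_pred_le_cyc_len:
  assumes "j < m"
  shows "norm (a j - a ((j + m - 1) mod m)) \<le> cyc_len m a"
proof -
  let ?i = "(j + m - 1) mod m"
  have "(?i + 1) mod m = (j + m - 1 + 1) mod m"
    by (rule mod_add_left_eq)
  also have "j + m - 1 + 1 = j + m"
    using assms by simp
  finally have "(?i + 1) mod m = j"
    using assms by simp
  moreover have "norm (a ?i - a ((?i + 1) mod m)) \<le> cyc_len m a"
    using assms by (intro norm_diff_succ_le_cyc_len) simp
  ultimately show ?thesis
    by (simp add: norm_minus_commute)
qed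

lemma infdist_succ_le_cyc_len:
  assumes "a \<in> prod_sets m C" and "j < m"
  shows "infdist (a j) (C ((j + 1) mod m)) \<le> cyc_len m a"
proof -
  have "a ((j + 1) mod m) \<in> C ((j + 1) mod m)"
    using assms by (simp add: prod_sets_def)
  then have "infdist (a j) (C ((j + 1) mod m)) \<le> norm (a j - a ((j + 1) mod m))"
    by (metis infdist_le dist_norm)
  also have "\<dots> \<le> cyc_len m a"
    using assms(2) by (rule norm_diff_succ_le_cyc_len)
  finally show ?thesis .
qed

lemma infdist_pred_le_cyc_len:
  assumes "a \<in> prod_sets m C" and "j < m"
  shows "infdist (a j) (C ((j + m - 1) mod m)) \<le> cyc_len m a"
proof -
  have "a ((j + m - 1) mod m) \<in> C ((j + m - 1) mod m)"
    using assms by (simp add: prod_sets_def)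
  then have "infdist (a j) (C ((j + m - 1) mod m)) \<le> norm (a j - a ((j + m - 1) mod m))"
    by (metis infdist_le dist_norm)
  also have "\<dots> \<le> cyc_len m a"
    using assms(2) by (rule norm_diff_pred_le_cyc_len)
  finally show ?thesis .
qed

lemma bounded_coordinate_cyc_len_sublevel:
  assumes "j < m"
    and escape: "\<And>x. (\<forall>k. x k \<in> C j) \<Longrightarrow> filterlim (\<lambda>k. norm (x k)) at_top sequentially \<Longrightarrow>
        filterlim (\<lambda>k. infdist (x k) (C ((j + m - 1) mod m))) at_top sequentially \<or>
        filterlim (\<lambda>k. infdist (x k) (C ((j + 1) mod m))) at_top sequentially"
  shows "bounded ((\<lambda>a. a j) ` {a \<in> prod_sets m C. cyc_len m a \<le> M})"
proof (rule ccontr)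
  assume "\<not> ?thesis"
  then obtain x where x: "\<And>k. x k \<in> (\<lambda>a. a j) ` {a \<in> prod_sets m C. cyc_len m a \<le> M}"
    and x_lim: "filterlim (\<lambda>k. norm (x k)) at_top sequentially"
    using unbounded_imp_norm_filterlim_at_top by blast
  then have "\<forall>k. \<exists>a. a \<in> prod_sets m C \<and> cyc_len m a \<le> M \<and> x k = a j"
    by blast
  then obtain f where f: "\<And>k. f k \<in> prod_sets m C" "\<And>k. cyc_len m (f k) \<le> M"
    and x_eq: "\<And>k. x k = f k j"
    by metis
  have "\<forall>k. x k \<in> C j"
    using f(1) assms(1) by (simp add: x_eq prod_sets_def)
  then have escapes: "filterlim (\<lambda>k. infdist (x k) (C ((j + m - 1) mod m))) at_top sequentially \<or>
      filterlim (\<lambda>k. infdist (x k) (C ((j + 1) mod m))) at_top sequentially"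
    using x_lim by (rule escape)
  have pred_bound: "\<forall>\<^sub>F k in sequentially. infdist (x k) (C ((j + m - 1) mod m)) \<le> M"
    unfolding x_eq using infdist_pred_le_cyc_len[OF f(1) assms(1)] f(2)
    by (intro always_eventually allI) (blast intro: order_trans)
  have succ_bound: "\<forall>\<^sub>F k in sequentially. infdist (x k) (C ((j + 1) mod m)) \<le> M"
    unfolding x_eq using infdist_succ_le_cyc_len[OF f(1) assms(1)] f(2)
    by (intro always_eventually allI) (blast intro: order_trans)
  show False
    using escapes not_filterlim_at_top_if_eventually_bounded[OF trivial_limit_sequentially pred_bound]
      not_filterlim_at_top_if_eventually_bounded[OF trivial_limit_sequentially succ_bound]
    by blast
qed

lemma cyc_len_attains_min_compact:
  fixes K :: "nat \<Rightarrow> 'a::real_normed_vector set"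
  assumes "\<And>i. i < m \<Longrightarrow> compact (K i)" and "\<And>i. i < m \<Longrightarrow> K i \<noteq> {}"
  shows "\<exists>a\<in>prod_sets m K. \<forall>b\<in>prod_sets m K. cyc_len m a \<le> cyc_len m b"
proof -
  \<comment> \<open>prod_sets m K leaves the coordinates from m on free, so it is not compact; pinning
    them to 0 gives a compact box, and cyc_len m ignores those coordinates.\<close>
  define S where "S i = (if i < m then K i else {0})" for i
  define trunc where "trunc b = (\<lambda>i. if i < m then b i else 0)" for b :: "nat \<Rightarrow> 'a"
  have trunc_in: "trunc b \<in> PiE UNIV S" if "b \<in> prod_sets m K" for b
    using that by (simp add: PiE_iff S_def trunc_def prod_sets_def)
  have "PiE UNIV S \<noteq> {}"
    using assms(2) by (simp add: PiE_eq_empty_iff S_def)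
  moreover have "compact (PiE UNIV S)"
    using assms(1) by (intro compact_PiE_UNIV) (simp add: S_def)
  ultimately obtain a where a: "a \<in> PiE UNIV S"
    and a_min: "\<And>c. c \<in> PiE UNIV S \<Longrightarrow> cyc_len m a \<le> cyc_len m c"
    using continuous_attains_inf[OF _ _ continuous_on_cyc_len] by metis
  have "a i \<in> K i" if "i < m" for i
  proof -
    have "a i \<in> S i"
      using a by (simp add: PiE_iff)
    with that show ?thesis
      by (simp add: S_def)
  qed
  then have "a \<in> prod_sets m K"
    by (simp add: prod_sets_def)
  moreover have "cyc_len m a \<le> cyc_len m b" if b: "b \<in> prod_sets m K" for b
  proof -
    have "cyc_len m (trunc b) = cyc_len m b"
      by (rule cyc_len_cong) (simp add: trunc_def)
    with a_min[OF trunc_in[OF b]] show ?thesis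
      by simp
  qed
  ultimately show ?thesis
    by blast
qed

lemma cyc_len_attains_min:
  fixes C :: "nat \<Rightarrow> 'a::euclidean_space set"
  assumes closed: "\<And>i. i < m \<Longrightarrow> closed (C i)"
    and a0: "a0 \<in> prod_sets m C"
    and bounded: "\<And>j. j < m \<Longrightarrow>
      bounded ((\<lambda>a. a j) ` {a \<in> prod_sets m C. cyc_len m a \<le> cyc_len m a0})"
  shows "\<exists>a\<in>prod_sets m C. \<forall>b\<in>prod_sets m C. cyc_len m a \<le> cyc_len m b"
proof -
  define L where "L = {a \<in> prod_sets m C. cyc_len m a \<le> cyc_len m a0}"
  define K where "K i = closure ((\<lambda>a. a i) ` L)" for i
  have a0_L: "a0 \<in> L"
    using a0 by (simp add: L_def)
  have K_sub: "K i \<subseteq> C i" if "i < m" for i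
    unfolding K_def
    by (rule closure_minimal) (use that closed in \<open>auto simp: L_def prod_sets_def\<close>)
  have L_sub: "L \<subseteq> prod_sets m K"
    by (auto simp: prod_sets_def K_def intro: closure_subset[THEN subsetD])
  have "compact (K i)" if "i < m" for i
    using bounded[OF that] by (simp add: K_def L_def)
  moreover have "K i \<noteq> {}" for i
    using a0_L by (auto simp: K_def)
  ultimately obtain a where a: "a \<in> prod_sets m K"
    and a_min: "\<forall>b\<in>prod_sets m K. cyc_len m a \<le> cyc_len m b"
    using cyc_len_attains_min_compact[of m K] by blast
  have "a \<in> prod_sets m C"
    using a K_sub by (auto simp: prod_sets_def)
  moreover have "cyc_len m a \<le> cyc_len m b" if b: "b \<in> prod_sets m C" for b
  proof (cases "b \<in> L")
    case True
    then show ?thesis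
      using L_sub a_min by blast
  next
    case False
    then have "cyc_len m a0 < cyc_len m b"
      using b by (simp add: L_def)
    moreover have "cyc_len m a \<le> cyc_len m a0"
      using L_sub a0_L a_min by blast
    ultimately show ?thesis
      by linarith
  qed
  ultimately show ?thesis
    by blast
qed

theorem mainTheorem1:
  fixes m :: nat and C :: "nat \<Rightarrow> 'a::euclidean_space set"
  assumes "m \<ge> 2"
    and "\<And>i. i < m \<Longrightarrow> C i \<noteq> {}"
    and "\<And>i. i < m \<Longrightarrow> closed (C i)"
    and "\<And>i. i < m \<Longrightarrow> convex (C i)"
    and "(\<forall>i<m. bounded (C i)) \<or>
         (\<forall>j<m. \<not> bounded (C j) \<longrightarrow>
            (\<forall>x :: nat \<Rightarrow> 'a. (\<forall>k. x k \<in> C j) \<longrightarrow>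
               filterlim (\<lambda>k. norm (x k)) at_top sequentially \<longrightarrow>
               filterlim (\<lambda>k. infdist (x k) (C ((j + m - 1) mod m))) at_top sequentially \<or>
               filterlim (\<lambda>k. infdist (x k) (C ((j + 1) mod m))) at_top sequentially))"
  shows "\<exists>a\<in>prod_sets m C. cyc_len m a = (INF b\<in>prod_sets m C. cyc_len m b)"
proof -
  have "\<forall>i. \<exists>x. i < m \<longrightarrow> x \<in> C i"
    using assms(2) by blast
  from choice[OF this] obtain a0 where "\<forall>i. i < m \<longrightarrow> a0 i \<in> C i"
    by blast
  then have a0: "a0 \<in> prod_sets m C"
    by (simp add: prod_sets_def)
  have "bounded ((\<lambda>a. a j) ` {a \<in> prod_sets m C. cyc_len m a \<le> cyc_len m a0})" if "j < m" for j
  proof (cases "bounded (C j)")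
    case True
    then show ?thesis
      by (rule bounded_subset) (use that in \<open>auto simp: prod_sets_def\<close>)
  next
    case False
    show ?thesis
      using that by (rule bounded_coordinate_cyc_len_sublevel) (use assms(5) False that in blast)
  qed
  with assms(3) a0 obtain a where a: "a \<in> prod_sets m C"
    and a_min: "\<forall>b\<in>prod_sets m C. cyc_len m a \<le> cyc_len m b"
    using cyc_len_attains_min by blast
  have "cyc_len m a = (INF b\<in>prod_sets m C. cyc_len m b)"
    using a a_min by (intro cInf_eq_minimum[symmetric]) auto
  with a show ?thesis
    by blast
qed

end
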